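(* Let $g=(g_1,\dots,g_\ell):\mathbb{R}^r\to\mathbb{R}^\ell$ and $m=(m_1,\dots,m_\ell):\mathcal{A}\to\mathbb{R}^\ell$ ($\mathcal A\subset\mathbb{R}^s$) be given, let $\{P_1(\cdot|\theta):\theta\in\Theta\}$, $\Theta\subset\mathbb{R}^d$, be a parametric family of probability measures on $\mathbb{R}^r$, and for $\alpha\in\mathcal A$ let $\mathcal{M}_\alpha=\{Q$ finite signed measure$:\int dQ=1,\ \int g\,dQ=m(\alpha)\}$ and $\mathcal M=\bigcup_{\alpha\in\mathcal A}\mathcal M_\alpha$. Let $P_T=P(\cdot|\phi^* )=\lambda^*P_1(\cdot|\theta^* )+(1-\lambda^* )P_0^*$ with $\phi^*=(\lambda^*,\theta^*,\alpha^* )$, $\lambda^*\in(0,1)$, so that $P_0^*=\frac{1}{1-\lambda^*}P_T-\frac{\lambda^*}{1-\lambda^*}P_1(\cdot|\theta^* )$. Let $$\mathcal N=\Big\{Q \text{ probability measure}:\ Q=\tfrac{1}{1-\lambda}P_T-\tfrac{\lambda}{1-\lambda}P_1(\cdot|\theta),\ \lambda\in(0,1),\ \theta\in\Theta\Big\}.$$ Assume that $P_0^*\in\mathcal M$ and that: (1) the system of equations $\int g_i(x)\big(dP(x|\phi^* )-\lambda\,dP_1(x|\theta)\big)=(1-\lambda)m_i(\alpha)$, $i=1,\dots,\ell$, has a unique solution $(\lambda^*,\theta^*,\alpha^* )$; (2) the function $\alpha\mapsto m(\alpha)$ is one-to-one; (3) for every $\theta\in\Theta$, $\lim_{\|x\|\to\infty}\frac{dP_1(x|\theta)}{dP_T(x)}=c$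 for some $c\in[0,\infty)\setminus\{1\}$; (4) the parametric component is identifiable: if $P_1(\cdot|\theta)=P_1(\cdot|\theta')$ $dP_T$-a.e., then $\theta=\theta'$. Then $\mathcal N\cap\mathcal M$ contains a unique measure, namely $P_0^*$, and there exists a unique vector $(\lambda^*,\theta^*,\alpha^* )$ such that $P_T=\lambda^*P_1(\cdot|\theta^* )+(1-\lambda^* )P_0^*$ with $P_0^*=\frac{1}{1-\lambda^*}P_T-\frac{\lambda^*}{1-\lambda^*}P_1(\cdot|\theta^* )\in\mathcal M_{\alpha^*}$.
   Context: $\frac{dP_1(\cdot|\theta)}{dP_T}$ denotes the Radon–Nikodym derivative. $P_T$ is the true distribution generating the data. *)

theory Defs
  imports "HOL-Probability.Probability"
begin

text \<open>Finite signed measures on the Borel sets of a topological space are represented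
  by their (real-valued) set functions.\<close>

definition sm_decomp :: "'x::topological_space measure \<Rightarrow> 'x measure \<Rightarrow> ('x set \<Rightarrow> real) \<Rightarrow> bool" where
  "sm_decomp \<mu> \<nu> Q \<longleftrightarrow> sets \<mu> = sets borel \<and> sets \<nu> = sets borel \<and>
     finite_measure \<mu> \<and> finite_measure \<nu> \<and>
     (\<forall>A\<in>sets borel. Q A = measure \<mu> A - measure \<nu> A)"

definition finite_signed_measure :: "('x::topological_space set \<Rightarrow> real) \<Rightarrow> bool" where
  "finite_signed_measure Q \<longleftrightarrow> (\<exists>\<mu> \<nu>. sm_decomp \<mu> \<nu> Q)"

text \<open>\<open>\<integral> f dQ = I\<close> for a finite signed measure \<open>Q\<close> (with \<open>f\<close> integrable w.r.t. the
  variation of \<open>Q\<close>; the value does not depend on the chosen decomposition).\<close>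
definition has_sm_integral :: "('x::topological_space set \<Rightarrow> real) \<Rightarrow> ('x \<Rightarrow> real) \<Rightarrow> real \<Rightarrow> bool" where
  "has_sm_integral Q f I \<longleftrightarrow> (\<exists>\<mu> \<nu>. sm_decomp \<mu> \<nu> Q \<and> integrable \<mu> f \<and> integrable \<nu> f \<and>
     I = integral\<^sup>L \<mu> f - integral\<^sup>L \<nu> f)"

definition M_alpha :: "('x::topological_space \<Rightarrow> real ^ 'l) \<Rightarrow> ('a \<Rightarrow> real ^ 'l) \<Rightarrow> 'a \<Rightarrow> ('x set \<Rightarrow> real) set" where
  "M_alpha g m \<alpha> = {Q. finite_signed_measure Q \<and> has_sm_integral Q (\<lambda>x. 1) 1 \<and>
     (\<forall>i. has_sm_integral Q (\<lambda>x. g x $ i) (m \<alpha> $ i))}"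

definition M_set :: "('x::topological_space \<Rightarrow> real ^ 'l) \<Rightarrow> ('a \<Rightarrow> real ^ 'l) \<Rightarrow> 'a set \<Rightarrow> ('x set \<Rightarrow> real) set" where
  "M_set g m \<A> = (\<Union>\<alpha>\<in>\<A>. M_alpha g m \<alpha>)"

definition comp0 :: "'x measure \<Rightarrow> ('t \<Rightarrow> 'x measure) \<Rightarrow> real \<Rightarrow> 't \<Rightarrow> 'x set \<Rightarrow> real" where
  "comp0 PT P1 lam \<theta> A = measure PT A / (1 - lam) - lam / (1 - lam) * measure (P1 \<theta>) A"

definition N_set :: "'x::topological_space measure \<Rightarrow> ('t \<Rightarrow> 'x measure) \<Rightarrow> 't set \<Rightarrow> 'x measure set" where
  "N_set PT P1 \<Theta> = {Q. prob_space Q \<and> sets Q = sets borel \<and>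
     (\<exists>lam\<in>{0<..<1}. \<exists>\<theta>\<in>\<Theta>. \<forall>A\<in>sets borel. measure Q A = comp0 PT P1 lam \<theta> A)}"

end

theory Submission
  imports Defs
begin

text \<open>The moment conditions defining \<open>\<M>_\<alpha>\<close>, multiplied by \<open>1 - \<lambda>\<close>, are exactly the
  equations of the identifying system applied to \<open>1/(1-\<lambda>) P_T - \<lambda>/(1-\<lambda>) P_1(\<cdot>|\<theta>)\<close>.
  Hence a triple \<open>(\<lambda>, \<theta>, \<alpha>)\<close> with this signed measure in \<open>\<M>_\<alpha>\<close> solves the system, and
  by its unique solvability it is \<open>(\<lambda>\<^sup>*, \<theta>\<^sup>*, \<alpha>\<^sup>*)\<close>. Every element of \<open>\<N> \<inter> \<M>\<close> and every
  admissible decomposition of \<open>P_T\<close> is of this form, and \<open>P\<^sub>0\<^sup>*\<close> is one.\<close>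

lemma finite_measure_eqI_measure:
  assumes "finite_measure M" "finite_measure N" "sets M = sets N"
    and "\<forall>A\<in>sets M. measure M A = measure N A"
  shows "M = N"
proof -
  interpret M: finite_measure M by fact
  interpret N: finite_measure N by fact
  show ?thesis
    using assms(3,4) by (intro measure_eqI) (auto simp: M.emeasure_eq_measure N.emeasure_eq_measure)
qed

lemma finite_measure_density_const:
  assumes "finite_measure M"
  shows "finite_measure (density M (\<lambda>_. ennreal c))"
proof -
  interpret finite_measure M by fact
  show ?thesis
    by (rule finite_measureI) (simp add: emeasure_density_const ennreal_mult_eq_top_iff)
qed

lemma sm_decomp_scale:
  assumes "sm_decomp \<mu> \<nu> Q" "c \<ge> 0" "\<forall>A\<in>sets borel. Q' A = c * Q A"
  shows "sm_decomp (density \<mu> (\<lambda>_. ennreal c)) (density \<nu> (\<lambda>_. ennreal c)) Q'"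
  using assms unfolding sm_decomp_def
  by (auto simp: finite_measure_density_const measure_density_const right_diff_distrib)

lemma integrable_density_const_scale:
  fixes f :: "'a \<Rightarrow> real"
  assumes "integrable M f" "c \<ge> 0"
  shows "integrable (density M (\<lambda>_. ennreal c)) f"
    and "integral\<^sup>L (density M (\<lambda>_. ennreal c)) f = c * integral\<^sup>L M f"
proof -
  have [measurable]: "f \<in> borel_measurable M" using assms(1) by auto
  show "integrable (density M (\<lambda>_. ennreal c)) f"
    using assms by (subst integrable_density) auto
  show "integral\<^sup>L (density M (\<lambda>_. ennreal c)) f = c * integral\<^sup>L M f"
    using assms(2) by (subst integral_density) auto
qed

lemma has_sm_integral_scale:
  assumes "has_sm_integral Q f I" "c \<ge> 0" "\<forall>A\<in>sets borel. Q' A = c * Q A"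
  shows "has_sm_integral Q' f (c * I)"
proof -
  obtain \<mu> \<nu> where decomp: "sm_decomp \<mu> \<nu> Q" and int: "integrable \<mu> f" "integrable \<nu> f"
    and I: "I = integral\<^sup>L \<mu> f - integral\<^sup>L \<nu> f"
    using assms(1) unfolding has_sm_integral_def by blast
  show ?thesis
    unfolding has_sm_integral_def
    using sm_decomp_scale[OF decomp assms(2,3)] I
      integrable_density_const_scale[OF int(1) assms(2)] integrable_density_const_scale[OF int(2) assms(2)]
    by (metis right_diff_distrib)
qed

lemma has_sm_integral_cong:
  assumes "has_sm_integral Q f I" "\<forall>A\<in>sets borel. Q' A = Q A"
  shows "has_sm_integral Q' f I"
  using has_sm_integral_scale[OF assms(1), of 1 Q'] assms(2) by simp

lemma M_alpha_cong:
  assumes "Q \<in> M_alpha g m \<alpha>" "\<forall>A\<in>sets borel. Q' A = Q A"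
  shows "Q' \<in> M_alpha g m \<alpha>"
proof -
  have total: "has_sm_integral Q' (\<lambda>x. 1) 1"
    using assms has_sm_integral_cong by (auto simp: M_alpha_def)
  then have "finite_signed_measure Q'"
    by (auto simp: has_sm_integral_def finite_signed_measure_def)
  moreover have "has_sm_integral Q' (\<lambda>x. g x $ i) (m \<alpha> $ i)" for i
    using assms has_sm_integral_cong unfolding M_alpha_def by blast
  ultimately show ?thesis
    using total by (simp add: M_alpha_def)
qed

lemma comp0_scaled:
  assumes "lam < 1"
  shows "(1 - lam) * comp0 PT P1 lam \<theta> A = measure PT A - lam * measure (P1 \<theta>) A"
  using assms unfolding comp0_def by (simp add: right_diff_distrib)

lemma mixture_comp0:
  assumes "lam < 1"
  shows "measure PT A = lam * measure (P1 \<theta>) A + (1 - lam) * comp0 PT P1 lam \<theta> A"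
  using comp0_scaled[OF assms, of PT P1 \<theta> A] by simp

lemma mixture_imp_comp0:
  assumes "lam < 1" "measure PT A = lam * measure (P1 \<theta>) A + (1 - lam) * Q A"
  shows "Q A = comp0 PT P1 lam \<theta> A"
  using assms comp0_scaled[OF assms(1), of PT P1 \<theta> A] by simp

lemma comp0_M_alpha_imp_moment_equations:
  assumes "comp0 PT P1 lam \<theta> \<in> M_alpha g m \<alpha>" "lam \<in> {0<..<1}"
  shows "\<forall>i. has_sm_integral (\<lambda>A. measure PT A - lam * measure (P1 \<theta>) A)
               (\<lambda>x. g x $ i) ((1 - lam) * m \<alpha> $ i)"
proof
  fix i
  have "has_sm_integral (comp0 PT P1 lam \<theta>) (\<lambda>x. g x $ i) (m \<alpha> $ i)"
    using assms(1) by (auto simp: M_alpha_def)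
  moreover have "\<forall>A\<in>sets borel. measure PT A - lam * measure (P1 \<theta>) A
      = (1 - lam) * comp0 PT P1 lam \<theta> A"
    using assms(2) comp0_scaled[of lam PT P1 \<theta>] by simp
  ultimately show "has_sm_integral (\<lambda>A. measure PT A - lam * measure (P1 \<theta>) A)
          (\<lambda>x. g x $ i) ((1 - lam) * m \<alpha> $ i)"
    using has_sm_integral_scale[of _ _ _ "1 - lam"] assms(2) by simp
qed

theorem proposition2:
  fixes g :: "real ^ 'r \<Rightarrow> real ^ 'l"
    and m :: "real ^ 's \<Rightarrow> real ^ 'l"
    and \<A> :: "(real ^ 's) set"
    and \<Theta> :: "(real ^ 'd) set"
    and P1 :: "real ^ 'd \<Rightarrow> (real ^ 'r) measure"
    and PT P0 :: "(real ^ 'r) measure"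
    and lams :: real and \<theta>s :: "real ^ 'd" and \<alpha>s :: "real ^ 's"
  assumes P1_prob: "\<forall>\<theta>\<in>\<Theta>. prob_space (P1 \<theta>) \<and> sets (P1 \<theta>) = sets borel"
    and PT_prob: "prob_space PT" "sets PT = sets borel"
    and P0_prob: "prob_space P0" "sets P0 = sets borel"
    and params: "lams \<in> {0<..<1}" "\<theta>s \<in> \<Theta>" "\<alpha>s \<in> \<A>"
    and mixture: "\<forall>A\<in>sets borel. measure PT A = lams * measure (P1 \<theta>s) A + (1 - lams) * measure P0 A"
    and P0_in_M: "measure P0 \<in> M_set g m \<A>"
    and unique_solution:
      "\<forall>lam\<in>{0<..<1}. \<forall>\<theta>\<in>\<Theta>. \<forall>\<alpha>\<in>\<A>.
         (\<forall>i. has_sm_integral (\<lambda>A. measure PT A - lam * measure (P1 \<theta>) A)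
                (\<lambda>x. g x $ i) ((1 - lam) * m \<alpha> $ i))
         \<longleftrightarrow> (lam, \<theta>, \<alpha>) = (lams, \<theta>s, \<alpha>s)"
    and m_inj: "inj_on m \<A>"
    and tail_ratio:
      "\<forall>\<theta>\<in>\<Theta>. \<exists>c::real. c \<ge> 0 \<and> c \<noteq> 1 \<and>
         (\<exists>f\<in>borel_measurable borel. (\<forall>x. f x \<ge> 0) \<and>
             P1 \<theta> = density PT (\<lambda>x. ennreal (f x)) \<and> (f \<longlongrightarrow> c) at_infinity)"
    and identifiable:
      "\<forall>\<theta>\<in>\<Theta>. \<forall>\<theta>'\<in>\<Theta>.
         (AE x in PT. RN_deriv PT (P1 \<theta>) x = RN_deriv PT (P1 \<theta>') x) \<longrightarrow> \<theta> = \<theta>'"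
  shows "{Q \<in> N_set PT P1 \<Theta>. measure Q \<in> M_set g m \<A>} = {P0}
    \<and> (\<forall>\<phi>. (\<phi> \<in> {0<..<1} \<times> \<Theta> \<times> \<A> \<and>
             (case \<phi> of (lam, \<theta>, \<alpha>) \<Rightarrow>
                (\<forall>A\<in>sets borel. measure PT A
                    = lam * measure (P1 \<theta>) A + (1 - lam) * comp0 PT P1 lam \<theta> A)
                \<and> comp0 PT P1 lam \<theta> \<in> M_alpha g m \<alpha>))
           \<longleftrightarrow> \<phi> = (lams, \<theta>s, \<alpha>s))"
proof -
  have solution_unique: "(lam, \<theta>, \<alpha>) = (lams, \<theta>s, \<alpha>s)"
    if "lam \<in> {0<..<1}" "\<theta> \<in> \<Theta>" "\<alpha> \<in> \<A>" "comp0 PT P1 lam \<theta> \<in> M_alpha g m \<alpha>" for lam \<theta> \<alpha>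
    using unique_solution[rule_format, OF that(1-3)]
      comp0_M_alpha_imp_moment_equations[OF that(4,1)] by simp
  have P0_comp0: "\<forall>A\<in>sets borel. measure P0 A = comp0 PT P1 lams \<theta>s A"
    using mixture params(1) mixture_imp_comp0[of lams PT _ P1 \<theta>s "measure P0"] by simp
  obtain \<alpha>0 where \<alpha>0: "\<alpha>0 \<in> \<A>" and P0_in: "measure P0 \<in> M_alpha g m \<alpha>0"
    using P0_in_M by (auto simp: M_set_def)
  have "comp0 PT P1 lams \<theta>s \<in> M_alpha g m \<alpha>0"
    using M_alpha_cong[OF P0_in] P0_comp0 by simp
  with solution_unique[OF params(1,2) \<alpha>0] have comp0_in: "comp0 PT P1 lams \<theta>s \<in> M_alpha g m \<alpha>s"
    by simp
  have "Q = P0" if Q_in_N: "Q \<in> N_set PT P1 \<Theta>" and Q_in_M: "measure Q \<in> M_set g m \<A>" for Q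
  proof -
    obtain lam \<theta> \<alpha> where params_Q: "lam \<in> {0<..<1}" "\<theta> \<in> \<Theta>" "\<alpha> \<in> \<A>"
      and Q_in: "measure Q \<in> M_alpha g m \<alpha>"
      and Q: "prob_space Q" "sets Q = sets borel" "\<forall>A\<in>sets borel. measure Q A = comp0 PT P1 lam \<theta> A"
      using Q_in_N Q_in_M unfolding N_set_def M_set_def by blast
    have "comp0 PT P1 lam \<theta> \<in> M_alpha g m \<alpha>"
      using M_alpha_cong[OF Q_in] Q(3) by simp
    with params_Q have "(lam, \<theta>) = (lams, \<theta>s)"
      using solution_unique by blast
    with Q P0_prob P0_comp0 show "Q = P0"
      by (intro finite_measure_eqI_measure) (auto simp: prob_space.finite_measure)
  qed
  moreover have "P0 \<in> N_set PT P1 \<Theta>"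
    using P0_prob params P0_comp0 by (auto simp: N_set_def)
  moreover have "(\<phi> \<in> {0<..<1} \<times> \<Theta> \<times> \<A> \<and>
             (case \<phi> of (lam, \<theta>, \<alpha>) \<Rightarrow>
                (\<forall>A\<in>sets borel. measure PT A
                    = lam * measure (P1 \<theta>) A + (1 - lam) * comp0 PT P1 lam \<theta> A)
                \<and> comp0 PT P1 lam \<theta> \<in> M_alpha g m \<alpha>))
           \<longleftrightarrow> \<phi> = (lams, \<theta>s, \<alpha>s)" for \<phi>
  proof (cases \<phi>)
    case (fields lam \<theta> \<alpha>)
    show ?thesis
      unfolding fields using solution_unique[of lam \<theta> \<alpha>] comp0_in params
        mixture_comp0[of lams PT _ P1 \<theta>s] by auto
  qed
  ultimately show ?thesis
    using P0_in_M by blast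
qed

end
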